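(* If $f:S\to T$ is a nested tuple morphism, then $\mathrm{coal}(L_f)=L_{\mathrm{coal}(f)}$.
   Context: Nested tuples (of positive integers): a positive integer or a finite tuple of nested tuples; flattening $X^\flat$ = integer leaves left to right, $\mathrm{len}$, $\mathrm{entry}_i$. $\langle n\rangle_*=\{*,1,\dots,n\}$. A layout is $L=S:D$ with congruent nested tuples $S$ (positive) and $D$ (nonnegative); $L^\flat=S^\flat:D^\flat$. For a flat layout $L=(s_1,\dots,s_m):(d_1,\dots,d_m)$, $\mathrm{squeeze}(L)$ removes all modes $s_i:d_i$ with $s_i=1$, and $\mathrm{coal}^\flat(L)$ is obtained from $\mathrm{squeeze}(L)$ by repeatedly replacing adjacent modes $s_i,s_{i+1}:d_i,d_{i+1}$ with $d_{i+1}=s_id_i$ by the single mode $s_is_{i+1}:d_i$ until no such pair remains. For a layout $L$, writing $\mathrm{coal}^\flat(L^\flat)=(s_1,\dots,s_m):(d_1,\dots,d_m)$: $\mathrm{coal}(L)$ is this flat layout if $m>1$, the depth-$0$ layout $s_1:d_1$ if $m=1$, and $1:0$ if $m=0$. A tuple morphism $f:(s_1,\dots,s_m)\to(t_1,\dots,t_n)$ is given by a pointed map $\alpha:\langle m\rangle_*\to\langle n\rangle_*$ with each $j\ne*$ having at most one preimage and $s_i=t_{\alpha(i)}$ whenever $\alpha(i)\ne*$; a nested tuple morphism $f:S\to T$ is a tuple morphism $f^\flat:S^\flat\to T^\flat$. The encoded layout $L_f$ has shape $S$ and stride congruent to $S$ with $i$-th flattened entry $0$ if $\alpha(i)=*$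 and $\prod_{j<\alpha(i)}t_j$ otherwise (where $T^\flat=(t_1,\dots,t_n)$). Coalesce of a tuple morphism $f$ over $\alpha$: $\mathrm{squeeze}(f)$ is obtained by deleting domain indices $i$ with $s_i=1$ and codomain indices $j$ with $t_j=1$ (renumbering increasingly); write it $(s_1,\dots,s_m)\to(t_1,\dots,t_n)$ over $\beta$. On $\{1,\dots,m\}$, for $i\le i'$ set $i\sim i'$ if either $\beta(i'')=*$ for all $i\le i''\le i'$, or $\beta(i'')=\beta(i)+(i''-i)$ for all $i\le i''\le i'$. On $\{1,\dots,n\}$, for $j\le j'$ set $j\sim j'$ if there is $i$ with $\beta(i+t)=j+t$ for all $0\le t\le j'-j$. The classes are intervals, ordered increasingly, identified with $\{1,\dots,\bar m\}$ and $\{1,\dots,\bar n\}$; $\bar s_{[i]}=\prod_{i'\in[i]}s_{i'}$, $\bar t_{[j]}=\prod_{j'\in[j]}t_{j'}$, $\bar\beta([i])=[\beta(i)]$ (or $*$). Then $\mathrm{coal}^\flat(f):(\bar s_1,\dots,\bar s_{\bar m})\to(\bar t_1,\dots,\bar t_{\bar n})$ lies over $\bar\beta$. For a nested tuple morphism $f$: if $\bar m>1$, $\mathrm{coal}(f)=\mathrm{coal}^\flat(f^\flat)$; if $\bar m=1$, $\mathrm{coal}(f)$ is the morphism from the integer $\bar s_1$ to $(\bar t_1,\dots,\bar t_{\bar n})$ with the same underlying map; if $\bar m=0$, $\mathrm{coal}(f)$ is the morphism from the integer $1$ to $(\bar t_1,\dots,\bar t_{\bar n})$ sending its entry to $*$.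 *)

theory Defs
  imports Main
begin

datatype 'a ntup = Lf 'a | Nd "'a ntup list"

fun flat :: "'a ntup \<Rightarrow> 'a list" where
  "flat (Lf x) = [x]"
| "flat (Nd xs) = concat (map flat xs)"

fun congruent :: "'a ntup \<Rightarrow> 'b ntup \<Rightarrow> bool" where
  "congruent (Lf _) (Lf _) = True"
| "congruent (Nd xs) (Nd ys) = list_all2 congruent xs ys"
| "congruent _ _ = False"

definition positive_nt :: "nat ntup \<Rightarrow> bool" where
  "positive_nt S \<longleftrightarrow> (\<forall>x \<in> set (flat S). 0 < x)"

type_synonym layout = "nat ntup \<times> nat ntup"

definition is_layout :: "layout \<Rightarrow> bool" where
  "is_layout L \<longleftrightarrow> positive_nt (fst L) \<and> congruent (fst L) (snd L)"

text \<open>Flat layouts are lists of modes (s_i, d_i).\<close>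
definition squeeze_l :: "(nat \<times> nat) list \<Rightarrow> (nat \<times> nat) list" where
  "squeeze_l xs = filter (\<lambda>(s, d). s \<noteq> 1) xs"

text \<open>Repeated merging of adjacent modes (s_i,d_i),(s_{i+1},d_{i+1}) with d_{i+1} = s_i d_i
  into (s_i s_{i+1}, d_i), until no such pair remains (carried out right to left).\<close>
fun merge_modes :: "(nat \<times> nat) list \<Rightarrow> (nat \<times> nat) list" where
  "merge_modes [] = []"
| "merge_modes (x # xs) =
     (case merge_modes xs of
        [] \<Rightarrow> [x]
      | y # ys \<Rightarrow> (if snd y = fst x * snd x then (fst x * fst y, snd x) # ys
                   else x # y # ys))"

definition coal_flat_l :: "(nat \<times> nat) list \<Rightarrow> (nat \<times> nat) list" where
  "coal_flat_l xs = merge_modes (squeeze_l xs)"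

definition coal_layout :: "layout \<Rightarrow> layout" where
  "coal_layout L =
    (let zs = coal_flat_l (zip (flat (fst L)) (flat (snd L))) in
     if length zs > 1 then (Nd (map (Lf \<circ> fst) zs), Nd (map (Lf \<circ> snd) zs))
     else if length zs = 1 then (Lf (fst (hd zs)), Lf (snd (hd zs)))
     else (Lf 1, Lf 0))"

text \<open>Indices are 0-based: the pointed map alpha on domain entries is a list of
  length m with entries None (= *) or Some j, j < n (0-based codomain index).\<close>
definition is_tuple_mor :: "nat list \<Rightarrow> nat list \<Rightarrow> nat option list \<Rightarrow> bool" where
  "is_tuple_mor ss ts al \<longleftrightarrow>
     length al = length ss \<and>
     (\<forall>i < length ss. \<forall>j. al ! i = Some j \<longrightarrow> j < length ts \<and> ss ! i = ts ! j) \<and>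
     (\<forall>i < length ss. \<forall>i' < length ss. \<forall>j. al ! i = Some j \<and> al ! i' = Some j \<longrightarrow> i = i')"

datatype ntmor = NTM (mdom: "nat ntup") (mcod: "nat ntup") (amap: "nat option list")

definition is_ntmor :: "ntmor \<Rightarrow> bool" where
  "is_ntmor f \<longleftrightarrow> positive_nt (mdom f) \<and> positive_nt (mcod f) \<and>
     is_tuple_mor (flat (mdom f)) (flat (mcod f)) (amap f)"

definition enc_strides :: "nat list \<Rightarrow> nat option list \<Rightarrow> nat list" where
  "enc_strides ts al = map (\<lambda>a. case a of None \<Rightarrow> 0 | Some j \<Rightarrow> prod_list (take j ts)) al"

definition enc_layout :: "ntmor \<Rightarrow> layout" where
  "enc_layout f = (mdom f,
     THE D. congruent (mdom f) D \<and> flat D = enc_strides (flat (mcod f)) (amap f))"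

definition kept :: "nat list \<Rightarrow> nat list" where
  "kept xs = filter (\<lambda>i. xs ! i \<noteq> 1) [0..<length xs]"

definition renum :: "nat list \<Rightarrow> nat \<Rightarrow> nat" where
  "renum ts j = length (filter (\<lambda>j'. ts ! j' \<noteq> 1) [0..<j])"

definition sq_dom :: "nat list \<Rightarrow> nat list" where
  "sq_dom ss = map (\<lambda>i. ss ! i) (kept ss)"

definition sq_map :: "nat list \<Rightarrow> nat list \<Rightarrow> nat option list \<Rightarrow> nat option list" where
  "sq_map ss ts al = map (\<lambda>i. map_option (renum ts) (al ! i)) (kept ss)"

definition drel :: "nat option list \<Rightarrow> nat \<Rightarrow> nat \<Rightarrow> bool" where
  "drel be i i' \<longleftrightarrow> i \<le> i' \<and>
     ((\<forall>k. i \<le> k \<and> k \<le> i' \<longrightarrow> be ! k = None) \<or>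
      (\<forall>k. i \<le> k \<and> k \<le> i' \<longrightarrow> be ! i \<noteq> None \<and> be ! k = Some (the (be ! i) + (k - i))))"

definition dsim :: "nat option list \<Rightarrow> nat \<Rightarrow> nat \<Rightarrow> bool" where
  "dsim be i i' \<longleftrightarrow> drel be i i' \<or> drel be i' i"

definition crel :: "nat option list \<Rightarrow> nat \<Rightarrow> nat \<Rightarrow> bool" where
  "crel be j j' \<longleftrightarrow> j \<le> j' \<and>
     (j = j' \<or> (\<exists>i. i + (j' - j) < length be \<and> (\<forall>t \<le> j' - j. be ! (i + t) = Some (j + t))))"

definition csim :: "nat option list \<Rightarrow> nat \<Rightarrow> nat \<Rightarrow> bool" where
  "csim be j j' \<longleftrightarrow> crel be j j' \<or> crel be j' j"

definition classes :: "(nat \<Rightarrow> nat \<Rightarrow> bool) \<Rightarrow> nat \<Rightarrow> nat set list" where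
  "classes R m =
     map (\<lambda>r. {i. i < m \<and> R r i})
       (sorted_list_of_set {r. r < m \<and> (\<forall>r' < r. \<not> R r' r)})"

definition coal_data :: "nat list \<Rightarrow> nat list \<Rightarrow> nat option list
                          \<Rightarrow> nat list \<times> nat list \<times> nat option list" where
  "coal_data ss0 ts0 al0 =
    (let ss = sq_dom ss0; ts = sq_dom ts0; be = sq_map ss0 ts0 al0;
         DC = classes (dsim be) (length ss); CC = classes (csim be) (length ts);
         sb = map (\<lambda>C. \<Prod>i\<in>C. ss ! i) DC;
         tb = map (\<lambda>C. \<Prod>j\<in>C. ts ! j) CC;
         bb = map (\<lambda>C. case be ! (Min C) of None \<Rightarrow> None
                        | Some j \<Rightarrow> Some (THE k. k < length CC \<and> j \<in> CC ! k)) DC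
     in (sb, tb, bb))"

definition coal_mor :: "ntmor \<Rightarrow> ntmor" where
  "coal_mor f =
    (case coal_data (flat (mdom f)) (flat (mcod f)) (amap f) of (sb, tb, bb) \<Rightarrow>
       if length sb > 1 then NTM (Nd (map Lf sb)) (Nd (map Lf tb)) bb
       else if length sb = 1 then NTM (Lf (hd sb)) (Nd (map Lf tb)) bb
       else NTM (Lf 1) (Nd (map Lf tb)) [None])"

end

theory Submission
  imports Defs
begin

text \<open>Squeezing commutes with encoding, because deleting codomain entries equal to 1 does not
  change prefix products. After squeezing, every codomain entry is at least 2, so prefix products
  are strictly increasing. Hence two adjacent modes \<open>(s, d), (s', d')\<close> of the squeezed \<open>L\<^sub>f\<close>
  satisfy \<open>d' = s d\<close> exactly when \<open>\<beta>\<close> sends both indices to \<open>*\<close> or to consecutive entries,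
  i.e. when they are equivalent in the domain of \<open>coal(f)\<close>: both sides cut the domain into the
  same runs, and the shapes agree. A merged mode keeps the stride of its first index \<open>a\<close>, and
  \<open>\<beta>(a)\<close> begins a codomain class, so that stride is the prefix product of the coalesced codomain
  up to the class of \<open>\<beta>(a)\<close>.\<close>

section \<open>Runs of glued positions\<close>

fun interval_partition :: "nat \<Rightarrow> nat \<Rightarrow> (nat \<times> nat) list \<Rightarrow> bool" where
  "interval_partition i e [] \<longleftrightarrow> i = e"
| "interval_partition i e (x # xs) \<longleftrightarrow>
     fst x = i \<and> fst x < snd x \<and> interval_partition (snd x) e xs"

lemma interval_partition_le: "interval_partition i e xs \<Longrightarrow> i \<le> e"
  by (induction xs arbitrary: i) fastforce+

lemma interval_partition_mem:
  "interval_partition i e xs \<Longrightarrow> x \<in> set xs \<Longrightarrow> i \<le> fst x \<and> fst x < snd x \<and> snd x \<le> e"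
proof (induction xs arbitrary: i)
  case (Cons y xs)
  then have "interval_partition (snd y) e xs" "fst y = i" "fst y < snd y" by auto
  then show ?case using Cons.IH Cons.prems(2) interval_partition_le by fastforce
qed simp

lemma interval_partition_sorted: "interval_partition i e xs \<Longrightarrow> sorted_wrt (<) (map fst xs)"
  by (induction xs arbitrary: i) (fastforce dest: interval_partition_mem)+

lemma interval_partition_cover:
  "interval_partition i e xs \<Longrightarrow> i \<le> j \<Longrightarrow> j < e \<Longrightarrow> \<exists>x\<in>set xs. fst x \<le> j \<and> j < snd x"
  by (induction xs arbitrary: i) (auto, metis not_le)

lemma interval_partition_nth_le:
  "interval_partition i e xs \<Longrightarrow> K < K' \<Longrightarrow> K' < length xs \<Longrightarrow> snd (xs ! K) \<le> fst (xs ! K')"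
proof (induction xs arbitrary: i K K')
  case (Cons x xs)
  then obtain L' where L': "K' = Suc L'" by (cases K') auto
  show ?case
  proof (cases K)
    case 0
    then show ?thesis
      using Cons.prems L' interval_partition_mem[of "snd x" e xs "xs ! L'"] by simp
  next
    case (Suc L)
    then show ?thesis using Cons.prems Cons.IH[of "snd x" L L'] L' by simp
  qed
qed simp

lemma interval_partition_nth_unique:
  assumes "interval_partition i e xs" "K < length xs" "K' < length xs"
    and "j \<in> {fst (xs ! K)..<snd (xs ! K)}" "j \<in> {fst (xs ! K')..<snd (xs ! K')}"
  shows "K = K'"
  using interval_partition_nth_le[OF assms(1), of K K'] interval_partition_nth_le[OF assms(1), of K' K]
    assms(2-5) by (cases K K' rule: linorder_cases) auto

lemma interval_partition_prod_take:
  assumes "interval_partition i e xs" "K < length xs"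
  shows "(\<Prod>x\<leftarrow>take K xs. \<Prod>k = fst x..<snd x. h k) =
           (\<Prod>k = i..<fst (xs ! K). h k :: 'a::comm_monoid_mult)"
  using assms
proof (induction xs arbitrary: i K)
  case (Cons x xs)
  show ?case
  proof (cases K)
    case (Suc L)
    have x: "fst x = i" "fst x < snd x" "interval_partition (snd x) e xs" using Cons.prems by auto
    then have "snd x \<le> fst (xs ! L)" using Suc Cons.prems interval_partition_mem[of "snd x" e xs "xs ! L"] by simp
    then show ?thesis
      using Cons.IH[OF x(3), of L] Suc Cons.prems x prod.atLeastLessThan_concat[of i "snd x" "fst (xs ! L)" h]
      by simp
  qed (use Cons.prems in simp)
qed simp

text \<open>\<open>runs g i n\<close> cuts \<open>[i, i + n)\<close> into the maximal intervals \<open>[a, b)\<close> such that \<open>g k\<close>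
  holds for \<open>a \<le> k < b - 1\<close>; here \<open>g k\<close> means that position \<open>k\<close> is glued to \<open>k + 1\<close>.
  The recursion mirrors \<open>merge_modes\<close>.\<close>
fun runs :: "(nat \<Rightarrow> bool) \<Rightarrow> nat \<Rightarrow> nat \<Rightarrow> (nat \<times> nat) list" where
  "runs g i 0 = []"
| "runs g i (Suc n) =
     (case runs g (Suc i) n of
        [] \<Rightarrow> [(i, Suc i)]
      | (a, b) # xs \<Rightarrow> if g i then (i, b) # xs else (i, Suc i) # (a, b) # xs)"

lemma runs_eq_Nil_iff: "runs g i n = [] \<longleftrightarrow> n = 0"
  by (cases n) (auto split: list.split prod.split)

lemma interval_partition_runs: "interval_partition i (i + n) (runs g i n)"
proof (induction n arbitrary: i)
  case (Suc n)
  then show ?case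
    using Suc.IH[of "Suc i"] runs_eq_Nil_iff[of g "Suc i" n]
    by (auto split: list.split prod.split)
qed simp

lemma runs_Suc_cases:
  obtains (single) "n = 0" "runs g i (Suc n) = [(i, Suc i)]"
  | (cons) b xs where "runs g (Suc i) n = (Suc i, b) # xs" "Suc i < b"
      "interval_partition b (Suc i + n) xs"
      "runs g i (Suc n) = (if g i then (i, b) # xs else (i, Suc i) # (Suc i, b) # xs)"
proof (cases "runs g (Suc i) n")
  case Nil
  then show ?thesis using single runs_eq_Nil_iff by auto
next
  case (Cons y xs)
  then show ?thesis
    using cons[of "snd y" xs] interval_partition_runs[of "Suc i" n g] by (cases y) auto
qed

lemma mem_runs_SucE:
  assumes "x \<in> set (runs g i (Suc n))"
  obtains (old) "x \<in> set (runs g (Suc i) n)" "fst x = Suc i \<Longrightarrow> \<not> g i"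
  | (single) "x = (i, Suc i)" "n = 0 \<or> \<not> g i"
  | (merged) b where "x = (i, b)" "g i" "(Suc i, b) \<in> set (runs g (Suc i) n)"
proof (cases rule: runs_Suc_cases[of n g i])
  case single
  then show ?thesis using assms that(2) by simp
next
  case (cons b xs)
  show ?thesis
  proof (cases "g i")
    case True
    then have "x = (i, b) \<or> x \<in> set xs" using assms cons(4) by simp
    moreover have "fst x \<noteq> Suc i" if "x \<in> set xs"
      using interval_partition_mem[OF cons(3) that] cons(2) by simp
    ultimately show ?thesis using True cons(1) that(1,3) by auto
  next
    case False
    then show ?thesis using assms cons that(1,2) by auto
  qed
qed

lemma runs_glued: "x \<in> set (runs g i n) \<Longrightarrow> fst x \<le> k \<Longrightarrow> Suc k < snd x \<Longrightarrow> g k"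
proof (induction n arbitrary: i x)
  case (Suc n)
  from Suc.prems(1) show ?case
  proof (cases rule: mem_runs_SucE)
    case (merged b)
    then show ?thesis using Suc.prems Suc.IH[where i = "Suc i" and x = "(Suc i, b)"] by (cases "k = i") auto
  qed (use Suc in auto)
qed simp

lemma runs_start: "x \<in> set (runs g i n) \<Longrightarrow> fst x = i \<or> \<not> g (fst x - 1)"
proof (induction n arbitrary: i x)
  case (Suc n)
  from Suc.prems show ?case
    by (cases rule: mem_runs_SucE) (use Suc.IH[where i = "Suc i" and x = x] in auto)
qed simp

lemma runs_end: "x \<in> set (runs g i n) \<Longrightarrow> snd x = i + n \<or> \<not> g (snd x - 1)"
proof (induction n arbitrary: i x)
  case (Suc n)
  from Suc.prems show ?case
  proof (cases rule: mem_runs_SucE)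
    case (merged b)
    then show ?thesis using Suc.IH[where i = "Suc i" and x = "(Suc i, b)"] by auto
  qed (use Suc.IH[where i = "Suc i" and x = x] in auto)
qed simp

lemma set_map_fst_runs: "set (map fst (runs g 0 n)) = {r. r < n \<and> (r = 0 \<or> \<not> g (r - 1))}"
proof (intro equalityI subsetI)
  fix r assume "r \<in> set (map fst (runs g 0 n))"
  then show "r \<in> {r. r < n \<and> (r = 0 \<or> \<not> g (r - 1))}"
    using runs_start[of _ g 0 n] interval_partition_mem[OF interval_partition_runs[of 0 n g]]
    by fastforce
next
  fix r assume r: "r \<in> {r. r < n \<and> (r = 0 \<or> \<not> g (r - 1))}"
  then obtain x where x: "x \<in> set (runs g 0 n)" "fst x \<le> r" "r < snd x"
    using interval_partition_cover[OF interval_partition_runs[of 0 n g], of r] by auto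
  have "fst x = r"
  proof (rule ccontr)
    assume "fst x \<noteq> r"
    then have "g (r - 1)" using runs_glued[OF x(1), of "r - 1"] x by simp
    then show False using r \<open>fst x \<noteq> r\<close> x by auto
  qed
  then show "r \<in> set (map fst (runs g 0 n))" using x by auto
qed

lemma runs_interval_iff:
  assumes x: "x \<in> set (runs g 0 m)" and "i < m"
  shows "(\<forall>k. min (fst x) i \<le> k \<and> k < max (fst x) i \<longrightarrow> g k) \<longleftrightarrow> fst x \<le> i \<and> i < snd x"
proof
  assume glued: "\<forall>k. min (fst x) i \<le> k \<and> k < max (fst x) i \<longrightarrow> g k"
  have bounds: "fst x < snd x" "snd x \<le> m"
    using interval_partition_mem[OF interval_partition_runs x] by auto
  have "\<not> i < fst x"
  proof
    assume "i < fst x"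
    then have "g (fst x - 1)" using glued by simp
    then show False using runs_start[OF x] \<open>i < fst x\<close> by simp
  qed
  moreover have "\<not> snd x \<le> i"
  proof
    assume "snd x \<le> i"
    moreover have "fst x \<le> snd x - 1" using bounds by simp
    ultimately have "g (snd x - 1)" using glued[rule_format, of "snd x - 1"] bounds by simp
    then show False using runs_end[OF x] \<open>snd x \<le> i\<close> \<open>i < m\<close> by simp
  qed
  ultimately show "fst x \<le> i \<and> i < snd x" by simp
next
  assume "fst x \<le> i \<and> i < snd x"
  then show "\<forall>k. min (fst x) i \<le> k \<and> k < max (fst x) i \<longrightarrow> g k"
    using runs_glued[OF x] by simp
qed

lemma classes_eq_runs:
  assumes R: "\<And>i i'. i < m \<Longrightarrow> i' < m \<Longrightarrow>
               R i i' \<longleftrightarrow> (\<forall>k. min i i' \<le> k \<and> k < max i i' \<longrightarrow> g k)"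
  shows "classes R m = map (\<lambda>x. {fst x..<snd x}) (runs g 0 m)"
proof -
  have "(\<forall>r' < r. \<not> R r' r) \<longleftrightarrow> r = 0 \<or> \<not> g (r - 1)" if "r < m" for r
  proof
    assume no_rep: "\<forall>r' < r. \<not> R r' r"
    show "r = 0 \<or> \<not> g (r - 1)"
    proof (rule ccontr)
      assume "\<not> (r = 0 \<or> \<not> g (r - 1))"
      then have "r \<noteq> 0" "g (r - 1)" by auto
      moreover have "k = r - 1" if "r - 1 \<le> k" "k < r" for k using that by simp
      ultimately have "R (r - 1) r" using R[of "r - 1" r] that by auto
      then show False using no_rep \<open>r \<noteq> 0\<close> by simp
    qed
  qed (use R that in force)
  then have "{r. r < m \<and> (\<forall>r' < r. \<not> R r' r)} = set (map fst (runs g 0 m))"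
    unfolding set_map_fst_runs by blast
  then have reps: "sorted_list_of_set {r. r < m \<and> (\<forall>r' < r. \<not> R r' r)} = map fst (runs g 0 m)"
    using interval_partition_sorted[OF interval_partition_runs[of 0 m g]]
    by (metis sorted_list_of_set.idem_if_sorted_distinct strict_sorted_iff)
  have "{i. i < m \<and> R (fst x) i} = {fst x..<snd x}" if "x \<in> set (runs g 0 m)" for x
    using runs_interval_iff[OF that] R[of "fst x"]
      interval_partition_mem[OF interval_partition_runs that] by auto
  then show ?thesis unfolding classes_def reps by simp
qed

lemma merge_modes_eq_runs:
  assumes "length xs = i + n"
    and "\<And>k. i \<le> k \<Longrightarrow> Suc k < i + n \<Longrightarrow>
           g k \<longleftrightarrow> snd (xs ! Suc k) = fst (xs ! k) * snd (xs ! k)"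
  shows "merge_modes (drop i xs) =
           map (\<lambda>x. (\<Prod>k = fst x..<snd x. fst (xs ! k), snd (xs ! fst x))) (runs g i n)"
  using assms
proof (induction n arbitrary: i)
  case (Suc n)
  define F where "F x = (\<Prod>k = fst x..<snd x. fst (xs ! k), snd (xs ! fst x))" for x :: "nat \<times> nat"
  have drop: "drop i xs = xs ! i # drop (Suc i) xs"
    using Suc.prems(1) by (simp add: Cons_nth_drop_Suc)
  have IH: "merge_modes (drop (Suc i) xs) = map F (runs g (Suc i) n)"
    using Suc.IH[of "Suc i"] Suc.prems unfolding F_def by simp
  show ?case
  proof (cases rule: runs_Suc_cases[of n g i])
    case single
    then show ?thesis using drop Suc.prems(1) by (simp add: F_def)
  next
    case (cons b xs')
    have "b \<le> Suc i + n" using interval_partition_le[OF cons(3)] .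
    then have glue: "g i \<longleftrightarrow> snd (xs ! Suc i) = fst (xs ! i) * snd (xs ! i)"
      using Suc.prems(2)[of i] cons(2) by simp
    have "F (i, b) = (fst (xs ! i) * fst (F (Suc i, b)), snd (xs ! i))"
      using cons(2) by (simp add: F_def prod.atLeast_Suc_lessThan)
    moreover have "F (i, Suc i) = xs ! i" by (simp add: F_def)
    ultimately show ?thesis
      using drop IH cons(1,4) glue by (simp add: F_def)
  qed
qed simp

section \<open>Squeezing\<close>

lemma sq_dom_eq_filter: "sq_dom xs = filter (\<lambda>x. x \<noteq> 1) xs"
proof -
  have "filter (\<lambda>x. x \<noteq> 1) (map (nth xs) [0..<length xs]) = sq_dom xs"
    unfolding filter_map sq_dom_def kept_def by (simp add: comp_def)
  then show ?thesis by (simp add: map_nth)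
qed

lemma set_kept: "set (kept xs) = {i. i < length xs \<and> xs ! i \<noteq> 1}"
  by (auto simp: kept_def)

lemma renum_eq_length_filter:
  "j \<le> length ts \<Longrightarrow> renum ts j = length (filter (\<lambda>x. x \<noteq> 1) (take j ts))"
proof -
  have "renum ts j = length (filter (\<lambda>x. x \<noteq> 1) (map (nth ts) [0..<j]))"
    unfolding renum_def by (simp add: length_filter_map comp_def)
  moreover assume "j \<le> length ts"
  then have "map (nth ts) [0..<j] = take j ts" by (intro nth_equalityI) auto
  ultimately show ?thesis by simp
qed

lemma take_renum_sq_dom:
  assumes "j \<le> length ts"
  shows "take (renum ts j) (sq_dom ts) = filter (\<lambda>x. x \<noteq> 1) (take j ts)"
proof -
  have "sq_dom ts = filter (\<lambda>x. x \<noteq> 1) (take j ts) @ filter (\<lambda>x. x \<noteq> 1) (drop j ts)"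
    unfolding sq_dom_eq_filter using append_take_drop_id[of j ts] filter_append by metis
  then show ?thesis using renum_eq_length_filter[OF assms] by simp
qed

lemma prod_list_take_renum:
  assumes "j \<le> length ts"
  shows "prod_list (take (renum ts j) (sq_dom ts)) = prod_list (take j ts)"
proof -
  have "prod_list (filter (\<lambda>x. x \<noteq> 1) xs) = prod_list xs" for xs :: "nat list"
    by (induction xs) auto
  then show ?thesis by (simp add: take_renum_sq_dom[OF assms])
qed

lemma sq_dom_nth_renum:
  assumes "j < length ts" "ts ! j \<noteq> 1"
  shows "renum ts j < length (sq_dom ts) \<and> sq_dom ts ! renum ts j = ts ! j"
proof -
  have "sq_dom ts = filter (\<lambda>x. x \<noteq> 1) (take j ts @ ts ! j # drop (Suc j) ts)"
    unfolding sq_dom_eq_filter using id_take_nth_drop[OF assms(1)] by (rule arg_cong)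
  then have "sq_dom ts =
      filter (\<lambda>x. x \<noteq> 1) (take j ts) @ ts ! j # filter (\<lambda>x. x \<noteq> 1) (drop (Suc j) ts)"
    using assms(2) by simp
  then show ?thesis using renum_eq_length_filter[of j ts] assms(1) by (simp add: nth_append)
qed

lemma renum_less:
  assumes "j < j'" "ts ! j \<noteq> 1"
  shows "renum ts j < renum ts j'"
proof -
  have "[0..<j'] = [0..<j] @ j # [Suc j..<j']"
    using assms(1) by (metis le0 le_add_diff_inverse less_imp_le_nat upt_add_eq_append upt_conv_Cons)
  then show ?thesis using assms(2) unfolding renum_def by simp
qed

lemma renum_inj: "ts ! j \<noteq> 1 \<Longrightarrow> ts ! j' \<noteq> 1 \<Longrightarrow> renum ts j = renum ts j' \<Longrightarrow> j = j'"
  using renum_less[of j j' ts] renum_less[of j' j ts] by (cases j j' rule: linorder_cases) auto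

lemma is_tuple_mor_squeeze:
  assumes mor: "is_tuple_mor ss ts al"
  shows "is_tuple_mor (sq_dom ss) (sq_dom ts) (sq_map ss ts al)"
proof -
  have kept: "kept ss ! p < length ss" "ss ! (kept ss ! p) \<noteq> 1" if "p < length (kept ss)" for p
    using nth_mem[OF that] unfolding set_kept by auto
  have image: "j < length (sq_dom ts) \<and> sq_dom ss ! p = sq_dom ts ! j"
    if p: "p < length (kept ss)" and j: "sq_map ss ts al ! p = Some j" for p j
  proof -
    obtain y where "al ! (kept ss ! p) = Some y" "j = renum ts y"
      using p j by (auto simp: sq_map_def)
    then show ?thesis
      using mor kept[OF p] sq_dom_nth_renum[of y ts] p
      unfolding is_tuple_mor_def sq_dom_def by auto
  qed
  have inj: "p = p'"
    if p: "p < length (kept ss)" "p' < length (kept ss)"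
      and j: "sq_map ss ts al ! p = Some j" "sq_map ss ts al ! p' = Some j" for p p' j
  proof -
    obtain y y' where y: "al ! (kept ss ! p) = Some y" "al ! (kept ss ! p') = Some y'"
      "renum ts y = renum ts y'"
      using p j by (auto simp: sq_map_def)
    then have "ts ! y \<noteq> 1" "ts ! y' \<noteq> 1"
      using mor kept p unfolding is_tuple_mor_def by metis+
    then have "kept ss ! p = kept ss ! p'"
      using mor kept p y renum_inj unfolding is_tuple_mor_def by metis
    then show ?thesis
      using p distinct_filter nth_eq_iff_index_eq unfolding kept_def by (metis distinct_upt)
  qed
  show ?thesis
    using image inj unfolding is_tuple_mor_def
    by (auto simp: sq_dom_def sq_map_def)
qed

lemma squeeze_zip_enc_strides:
  assumes mor: "is_tuple_mor ss ts al"
  shows "squeeze_l (zip ss (enc_strides ts al)) =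
           zip (sq_dom ss) (enc_strides (sq_dom ts) (sq_map ss ts al))"
proof -
  have len: "length (enc_strides ts al) = length ss"
    using mor unfolding is_tuple_mor_def enc_strides_def by simp
  have "squeeze_l (zip ss (enc_strides ts al)) = map (\<lambda>i. (ss ! i, enc_strides ts al ! i)) (kept ss)"
  proof -
    have zip: "zip ss (enc_strides ts al) = map (\<lambda>i. (ss ! i, enc_strides ts al ! i)) [0..<length ss]"
      using len by (intro nth_equalityI) auto
    show ?thesis unfolding squeeze_l_def kept_def zip filter_map by (simp add: comp_def)
  qed
  also have "\<dots> = map (\<lambda>i. (ss ! i, case map_option (renum ts) (al ! i) of
                         None \<Rightarrow> 0 | Some j \<Rightarrow> prod_list (take j (sq_dom ts)))) (kept ss)"
  proof (rule map_cong[OF refl])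
    fix i assume "i \<in> set (kept ss)"
    then have "i < length ss" by (simp add: set_kept)
    then show "(ss ! i, enc_strides ts al ! i) =
               (ss ! i, case map_option (renum ts) (al ! i) of
                          None \<Rightarrow> 0 | Some j \<Rightarrow> prod_list (take j (sq_dom ts)))"
      using mor prod_list_take_renum[of _ ts] unfolding is_tuple_mor_def enc_strides_def
      by (cases "al ! i") auto
  qed
  also have "\<dots> = zip (sq_dom ss) (enc_strides (sq_dom ts) (sq_map ss ts al))"
    unfolding sq_dom_def sq_map_def by (simp add: enc_strides_def zip_map_map zip_same_conv_map)
  finally show ?thesis .
qed

section \<open>The equivalences on the domain and codomain\<close>

definition dom_glued :: "nat option list \<Rightarrow> nat \<Rightarrow> bool" where
  "dom_glued be k \<longleftrightarrow>
     (be ! k = None \<and> be ! Suc k = None) \<or> (\<exists>j. be ! k = Some j \<and> be ! Suc k = Some (Suc j))"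

definition cod_glued :: "nat option list \<Rightarrow> nat \<Rightarrow> bool" where
  "cod_glued be j \<longleftrightarrow> (\<exists>p. Suc p < length be \<and> be ! p = Some j \<and> be ! Suc p = Some (Suc j))"

lemma drel_iff_dom_glued:
  assumes "i \<le> i'"
  shows "drel be i i' \<longleftrightarrow> (\<forall>k. i \<le> k \<and> k < i' \<longrightarrow> dom_glued be k)"
proof
  assume "drel be i i'"
  then have shift: "be ! k = map_option (\<lambda>c. c + (k - i)) (be ! i)" if "i \<le> k" "k \<le> i'" for k
    using that unfolding drel_def by (cases "be ! i") auto
  show "\<forall>k. i \<le> k \<and> k < i' \<longrightarrow> dom_glued be k"
  proof (intro allI impI)
    fix k assume k: "i \<le> k \<and> k < i'"
    then show "dom_glued be k"
      using shift[of k] shift[of "Suc k"] unfolding dom_glued_def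
      by (cases "be ! i") (auto simp: Suc_diff_le)
  qed
next
  assume glued: "\<forall>k. i \<le> k \<and> k < i' \<longrightarrow> dom_glued be k"
  have "be ! k = map_option (\<lambda>c. c + (k - i)) (be ! i)" if "i \<le> k" "k \<le> i'" for k
    using that
  proof (induction k rule: dec_induct)
    case (step n)
    then show ?case
      using glued[rule_format, of n] unfolding dom_glued_def by (auto simp: Suc_diff_le)
  qed (cases "be ! i"; simp)
  then show "drel be i i'"
    unfolding drel_def using assms by (cases "be ! i") auto
qed

lemma dsim_iff_dom_glued:
  "dsim be i i' \<longleftrightarrow> (\<forall>k. min i i' \<le> k \<and> k < max i i' \<longrightarrow> dom_glued be k)"
  unfolding dsim_def using drel_iff_dom_glued[of i i' be] drel_iff_dom_glued[of i' i be]
  by (cases i i' rule: linorder_cases) (auto simp: drel_def)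

lemma cod_glued_if_crel: "crel be j j' \<Longrightarrow> j \<le> k \<Longrightarrow> k < j' \<Longrightarrow> cod_glued be k"
proof -
  assume "crel be j j'" "j \<le> k" "k < j'"
  then obtain i where i: "i + (j' - j) < length be" "\<forall>t \<le> j' - j. be ! (i + t) = Some (j + t)"
    by (auto simp: crel_def)
  then show "cod_glued be k"
    unfolding cod_glued_def
    using \<open>j \<le> k\<close> \<open>k < j'\<close> i(2)[rule_format, of "k - j"] i(2)[rule_format, of "Suc (k - j)"]
    by (intro exI[of _ "i + (k - j)"]) auto
qed

lemma crel_iff_cod_glued:
  assumes inj: "inj_on (nth be) {p. p < length be \<and> be ! p \<noteq> None}" and "j \<le> j'"
  shows "crel be j j' \<longleftrightarrow> (\<forall>k. j \<le> k \<and> k < j' \<longrightarrow> cod_glued be k)"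
  using assms(2)
proof (induction j' rule: dec_induct)
  case base
  show ?case by (auto simp: crel_def)
next
  case (step j')
  show ?case
  proof
    assume glued: "\<forall>k. j \<le> k \<and> k < Suc j' \<longrightarrow> cod_glued be k"
    obtain p where p: "Suc p < length be" "be ! p = Some j'" "be ! Suc p = Some (Suc j')"
      using glued step.hyps unfolding cod_glued_def by auto
    obtain i where i: "p = i + (j' - j)" "\<forall>t \<le> j' - j. be ! (i + t) = Some (j + t)"
    proof (cases "j = j'")
      case True
      then show ?thesis using that[of p] p by simp
    next
      case False
      have "crel be j j'" using step.IH glued by simp
      then obtain i where i: "i + (j' - j) < length be" "\<forall>t \<le> j' - j. be ! (i + t) = Some (j + t)"
        using False by (auto simp: crel_def)
      then have "be ! (i + (j' - j)) = be ! p" using p step.hyps i(2)[rule_format, of "j' - j"] by simp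
      then have "p = i + (j' - j)" using inj_onD[OF inj] i(1) p by auto
      then show ?thesis using that i by simp
    qed
    have "\<forall>t \<le> Suc j' - j. be ! (i + t) = Some (j + t)"
      using i p step.hyps by (auto simp: le_Suc_eq Suc_diff_le)
    then show "crel be j (Suc j')"
      unfolding crel_def using i(1) p(1) step.hyps by (auto simp: Suc_diff_le)
  qed (use cod_glued_if_crel in blast)
qed

lemma csim_iff_cod_glued:
  assumes "inj_on (nth be) {p. p < length be \<and> be ! p \<noteq> None}"
  shows "csim be j j' \<longleftrightarrow> (\<forall>k. min j j' \<le> k \<and> k < max j j' \<longrightarrow> cod_glued be k)"
  unfolding csim_def using crel_iff_cod_glued[OF assms, of j j'] crel_iff_cod_glued[OF assms, of j' j]
  by (cases j j' rule: linorder_cases) (auto simp: crel_def)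

section \<open>Coalescing a squeezed morphism\<close>

lemma prod_list_take_pos:
  assumes "\<forall>x\<in>set ts. 0 < x"
  shows "0 < prod_list (take j (ts :: nat list))"
proof -
  have "0 \<notin> set (take j ts)" using assms by (auto dest: in_set_takeD)
  then show ?thesis by (metis gr0I prod_list_zero_iff)
qed

lemma prod_list_take_strict_mono:
  assumes gt1: "\<forall>x\<in>set ts. 1 < x" and "j < j'" "j' \<le> length ts"
  shows "prod_list (take j ts) < prod_list (take j' (ts :: nat list))"
  using assms(2,3)
proof (induction j')
  case (Suc j')
  have "0 < prod_list (take j' ts)" using gt1 by (intro prod_list_take_pos) auto
  moreover have "1 < ts ! j'" using gt1 Suc.prems by simp
  ultimately have "prod_list (take j' ts) < prod_list (take (Suc j') ts)"
    using Suc.prems by (simp add: take_Suc_conv_app_nth)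
  then show ?case using Suc by (cases "j = j'") auto
qed simp

lemma enc_strides_merge_iff_dom_glued:
  assumes mor: "is_tuple_mor ss ts be" and pos: "\<forall>x\<in>set ss. 0 < x"
    and gt1: "\<forall>x\<in>set ts. 1 < x" and k: "Suc k < length ss"
  shows "enc_strides ts be ! Suc k = ss ! k * enc_strides ts be ! k \<longleftrightarrow> dom_glued be k"
proof -
  let ?P = "\<lambda>j. prod_list (take j ts)"
  have stride: "enc_strides ts be ! p = (case be ! p of None \<Rightarrow> 0 | Some j \<Rightarrow> ?P j)"
    if "p < length ss" for p
    using that mor by (simp add: enc_strides_def is_tuple_mor_def)
  have target: "j < length ts \<and> ts ! j = ss ! p" if "p < length ss" "be ! p = Some j" for p j
    using mor that unfolding is_tuple_mor_def by auto
  have P_pos: "0 < ?P j" for j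
    using gt1 by (intro prod_list_take_pos) auto
  have P_inj: "?P j = ?P j' \<longleftrightarrow> j = j'" if "j \<le> length ts" "j' \<le> length ts" for j j'
    using prod_list_take_strict_mono[OF gt1, of j j'] prod_list_take_strict_mono[OF gt1, of j' j] that
    by (cases j j' rule: linorder_cases) auto
  have "0 < ss ! k" using pos k by simp
  show ?thesis
  proof (cases "be ! k")
    case None
    then show ?thesis
      using stride[of k] stride[of "Suc k"] k P_pos unfolding dom_glued_def
      by (cases "be ! Suc k") auto
  next
    case (Some j)
    have j: "j < length ts" "ts ! j = ss ! k" using target[of k j] k Some by auto
    then have P_Suc: "?P (Suc j) = ss ! k * ?P j" by (simp add: take_Suc_conv_app_nth)
    show ?thesis
    proof (cases "be ! Suc k")
      case None
      then show ?thesis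
        using Some stride[of k] stride[of "Suc k"] k P_pos \<open>0 < ss ! k\<close> unfolding dom_glued_def
        by simp
    next
      case (Some j')
      then have "j' < length ts" using target[of "Suc k" j'] k by simp
      then show ?thesis
        using Some \<open>be ! k = Some j\<close> stride[of k] stride[of "Suc k"] k P_Suc P_inj[of j' "Suc j"] j(1)
        unfolding dom_glued_def by simp
    qed
  qed
qed

locale coalescible =
  fixes ss0 ts0 :: "nat list" and al0 :: "nat option list"
  assumes dom_pos: "\<forall>x\<in>set ss0. 0 < x" and cod_pos: "\<forall>x\<in>set ts0. 0 < x"
    and mor0: "is_tuple_mor ss0 ts0 al0"
begin

abbreviation "ss \<equiv> sq_dom ss0"
abbreviation "ts \<equiv> sq_dom ts0"
abbreviation "be \<equiv> sq_map ss0 ts0 al0"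

lemma squeezed_mor: "is_tuple_mor ss ts be"
  using is_tuple_mor_squeeze[OF mor0] .

lemma squeezed_dom_pos: "\<forall>x\<in>set ss. 0 < x"
  using dom_pos by (simp add: sq_dom_eq_filter)

lemma squeezed_cod_gt1: "\<forall>x\<in>set ts. 1 < x"
  using cod_pos by (auto simp: sq_dom_eq_filter)

lemma squeezed_map_inj: "inj_on (nth be) {p. p < length be \<and> be ! p \<noteq> None}"
  using squeezed_mor unfolding is_tuple_mor_def inj_on_def by force

definition dom_runs :: "(nat \<times> nat) list" where
  "dom_runs = runs (dom_glued be) 0 (length ss)"

definition cod_runs :: "(nat \<times> nat) list" where
  "cod_runs = runs (cod_glued be) 0 (length ts)"

definition cod_run_index :: "nat \<Rightarrow> nat" where
  "cod_run_index j = (THE K. K < length cod_runs \<and> j \<in> {fst (cod_runs ! K)..<snd (cod_runs ! K)})"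

lemma classes_dsim: "classes (dsim be) (length ss) = map (\<lambda>x. {fst x..<snd x}) dom_runs"
  unfolding dom_runs_def by (rule classes_eq_runs) (rule dsim_iff_dom_glued)

lemma classes_csim: "classes (csim be) (length ts) = map (\<lambda>x. {fst x..<snd x}) cod_runs"
  unfolding cod_runs_def by (rule classes_eq_runs) (rule csim_iff_cod_glued[OF squeezed_map_inj])

lemma interval_partition_dom_runs: "interval_partition 0 (length ss) dom_runs"
  using interval_partition_runs[of 0 "length ss"] unfolding dom_runs_def by simp

lemma interval_partition_cod_runs: "interval_partition 0 (length ts) cod_runs"
  using interval_partition_runs[of 0 "length ts"] unfolding cod_runs_def by simp

lemma dom_run_bounds: "x \<in> set dom_runs \<Longrightarrow> fst x < snd x \<and> snd x \<le> length ss"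
  using interval_partition_mem[OF interval_partition_dom_runs] by simp

lemma coal_flat_l_eq_runs:
  "coal_flat_l (zip ss0 (enc_strides ts0 al0)) =
     map (\<lambda>x. (\<Prod>k = fst x..<snd x. ss ! k, enc_strides ts be ! fst x)) dom_runs"
proof -
  let ?zs = "zip ss (enc_strides ts be)"
  have len: "length (enc_strides ts be) = length ss"
    using squeezed_mor by (simp add: enc_strides_def is_tuple_mor_def)
  have "merge_modes (drop 0 ?zs) =
          map (\<lambda>x. (\<Prod>k = fst x..<snd x. fst (?zs ! k), snd (?zs ! fst x))) dom_runs"
    unfolding dom_runs_def
  proof (rule merge_modes_eq_runs)
    fix k assume "Suc k < 0 + length ss"
    then show "dom_glued be k \<longleftrightarrow> snd (?zs ! Suc k) = fst (?zs ! k) * snd (?zs ! k)"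
      using len enc_strides_merge_iff_dom_glued[OF squeezed_mor squeezed_dom_pos squeezed_cod_gt1, of k]
      by simp
  qed (simp add: len)
  also have "\<dots> = map (\<lambda>x. (\<Prod>k = fst x..<snd x. ss ! k, enc_strides ts be ! fst x)) dom_runs"
  proof (rule map_cong[OF refl])
    fix x assume "x \<in> set dom_runs"
    then have "fst x < snd x" "snd x \<le> length ss" using dom_run_bounds by auto
    then show "(\<Prod>k = fst x..<snd x. fst (?zs ! k), snd (?zs ! fst x)) =
               (\<Prod>k = fst x..<snd x. ss ! k, enc_strides ts be ! fst x)"
      using len by (auto intro!: prod.cong)
  qed
  finally show ?thesis
    unfolding coal_flat_l_def squeeze_zip_enc_strides[OF mor0] by simp
qed

text \<open>A domain run starting at \<open>a\<close> is sent to the start of a codomain run: otherwise the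
  predecessor of \<open>\<beta>(a)\<close> would have a preimage, which by injectivity is \<open>a - 1\<close>, and \<open>a - 1\<close>
  would be glued to \<open>a\<close>.\<close>
lemma dom_run_start_target:
  assumes x: "x \<in> set dom_runs" and j: "be ! fst x = Some j"
  shows "j \<in> set (map fst cod_runs)"
proof -
  have "fst x < length ss" using dom_run_bounds[OF x] by simp
  then have "j < length ts" using squeezed_mor j unfolding is_tuple_mor_def by auto
  moreover have "j = 0 \<or> \<not> cod_glued be (j - 1)"
  proof (rule ccontr)
    assume "\<not> (j = 0 \<or> \<not> cod_glued be (j - 1))"
    then obtain p where p: "Suc p < length be" "be ! p = Some (j - 1)" "be ! Suc p = Some j"
      unfolding cod_glued_def by auto
    have "Suc p = fst x"
      using inj_onD[OF squeezed_map_inj, of "Suc p" "fst x"] p j \<open>fst x < length ss\<close>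
        squeezed_mor
      unfolding is_tuple_mor_def by auto
    moreover have "dom_glued be p"
      using p \<open>\<not> (j = 0 \<or> \<not> cod_glued be (j - 1))\<close> unfolding dom_glued_def by auto
    ultimately have "fst x \<noteq> 0" "dom_glued be (fst x - 1)" by (metis diff_Suc_1 nat.simps(3))+
    then show False
      using runs_start[of x "dom_glued be" 0 "length ss"] x unfolding dom_runs_def by auto
  qed
  ultimately show ?thesis unfolding cod_runs_def set_map_fst_runs by simp
qed

lemma cod_run_index_eq:
  assumes "K < length cod_runs" "j \<in> {fst (cod_runs ! K)..<snd (cod_runs ! K)}"
  shows "cod_run_index j = K"
  unfolding cod_run_index_def
proof (rule the_equality)
  show "K < length cod_runs \<and> j \<in> {fst (cod_runs ! K)..<snd (cod_runs ! K)}" using assms by simp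
next
  fix K' assume "K' < length cod_runs \<and> j \<in> {fst (cod_runs ! K')..<snd (cod_runs ! K')}"
  then show "K' = K"
    using interval_partition_nth_unique[OF interval_partition_cod_runs, of K' K j] assms by auto
qed

lemma prod_list_take_at_dom_run_start:
  assumes x: "x \<in> set dom_runs" and j: "be ! fst x = Some j"
  shows "prod_list (take j ts) =
           prod_list (take (cod_run_index j) (map (\<lambda>y. \<Prod>k = fst y..<snd y. ts ! k) cod_runs))"
proof -
  obtain K where K: "K < length cod_runs" "fst (cod_runs ! K) = j"
    using dom_run_start_target[OF x j] by (metis in_set_conv_nth length_map nth_map)
  have "fst (cod_runs ! K) < snd (cod_runs ! K)"
    using interval_partition_mem[OF interval_partition_cod_runs nth_mem[OF K(1)]] by simp
  then have "cod_run_index j = K" using cod_run_index_eq[OF K(1)] K(2) by simp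
  moreover have "fst x < length ss" using dom_run_bounds[OF x] by simp
  then have "j \<le> length ts" using squeezed_mor j unfolding is_tuple_mor_def by (simp add: less_imp_le)
  ultimately show ?thesis
    using interval_partition_prod_take[OF interval_partition_cod_runs K(1), of "nth ts"] K(2)
    by (simp add: take_map prod.list_conv_set_nth)
qed

lemma coal_data_eq_runs:
  "coal_data ss0 ts0 al0 =
     (map (\<lambda>x. \<Prod>k = fst x..<snd x. ss ! k) dom_runs,
      map (\<lambda>y. \<Prod>k = fst y..<snd y. ts ! k) cod_runs,
      map (\<lambda>x. map_option cod_run_index (be ! fst x)) dom_runs)"
proof -
  have "Min {fst x..<snd x} = fst x" if "x \<in> set dom_runs" for x
    using dom_run_bounds[OF that] by (simp add: Min_eq_iff)
  moreover have "(THE K. K < length (map (\<lambda>x. {fst x..<snd x}) cod_runs) \<and>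
                    j \<in> map (\<lambda>x. {fst x..<snd x}) cod_runs ! K) = cod_run_index j" for j
    unfolding cod_run_index_def by (simp cong: conj_cong)
  ultimately show ?thesis
    unfolding coal_data_def Let_def classes_dsim classes_csim
    by (simp add: map_option_case[symmetric] comp_def)
qed

lemma coal_flat_l_eq_coal_data:
  assumes "coal_data ss0 ts0 al0 = (sb, tb, bb)"
  shows "coal_flat_l (zip ss0 (enc_strides ts0 al0)) = zip sb (enc_strides tb bb)"
    and "length bb = length sb"
proof -
  have sb: "sb = map (\<lambda>x. \<Prod>k = fst x..<snd x. ss ! k) dom_runs"
    and tb: "tb = map (\<lambda>y. \<Prod>k = fst y..<snd y. ts ! k) cod_runs"
    and bb: "bb = map (\<lambda>x. map_option cod_run_index (be ! fst x)) dom_runs"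
    using assms unfolding coal_data_eq_runs by auto
  show "length bb = length sb" unfolding sb bb by simp
  have "enc_strides ts be ! fst x =
          (case map_option cod_run_index (be ! fst x) of None \<Rightarrow> 0 | Some K \<Rightarrow> prod_list (take K tb))"
    if "x \<in> set dom_runs" for x
  proof -
    have "fst x < length be"
      using that dom_run_bounds squeezed_mor unfolding is_tuple_mor_def by fastforce
    then show ?thesis
      using prod_list_take_at_dom_run_start[OF that] unfolding tb enc_strides_def
      by (cases "be ! fst x") auto
  qed
  then have "zip sb (enc_strides tb bb) =
          map (\<lambda>x. (\<Prod>k = fst x..<snd x. ss ! k, enc_strides ts be ! fst x)) dom_runs"
    unfolding sb bb by (simp add: enc_strides_def zip_map_map zip_same_conv_map)
  then show "coal_flat_l (zip ss0 (enc_strides ts0 al0)) = zip sb (enc_strides tb bb)"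
    by (simp add: coal_flat_l_eq_runs)
qed

end

section \<open>Strides and layouts\<close>

lemma congruent_length_flat: "congruent X Y \<Longrightarrow> length (flat X) = length (flat Y)"
proof (induction X Y rule: congruent.induct)
  case (2 xs ys)
  then have "list_all2 congruent xs ys" by simp
  then show ?case using 2 by (induction xs ys rule: list_all2_induct) auto
qed auto

lemma congruent_flat_inj:
  "congruent (X :: 'a ntup) (D1 :: 'b ntup) \<Longrightarrow> congruent X D2 \<Longrightarrow> flat D1 = flat D2 \<Longrightarrow> D1 = D2"
proof (induction X arbitrary: D1 D2)
  case (Lf x)
  then show ?case by (cases D1; cases D2) auto
next
  case (Nd xs)
  obtain ys1 ys2 where D: "D1 = Nd ys1" "D2 = Nd ys2"
    using Nd.prems(1,2) by (cases D1; cases D2) auto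
  have "ys1 = ys2"
    if "list_all2 congruent xs' ys1" "list_all2 congruent xs' ys2"
      "concat (map flat ys1) = concat (map flat ys2)" "set xs' \<subseteq> set xs"
    for xs' and ys1 ys2 :: "'b ntup list"
    using that
  proof (induction xs' arbitrary: ys1 ys2)
    case (Cons x xs')
    obtain y1 r1 y2 r2 where ys: "ys1 = y1 # r1" "ys2 = y2 # r2"
      "congruent x y1" "congruent x y2" "list_all2 congruent xs' r1" "list_all2 congruent xs' r2"
      using Cons.prems(1,2) by (auto simp: list_all2_Cons1)
    have "length (flat y1) = length (flat y2)"
      using congruent_length_flat ys(3,4) by metis
    then have "flat y1 = flat y2" "concat (map flat r1) = concat (map flat r2)"
      using Cons.prems(3) ys(1,2) by auto
    then show ?case using Nd.IH[of x y1 y2] Cons.IH[of r1 r2] Cons.prems(4) ys by simp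
  qed simp
  then show ?case using Nd.prems D by simp
qed

lemma ex_congruent_flat:
  "length xs = length (flat (S :: 'a ntup)) \<Longrightarrow> \<exists>D :: 'b ntup. congruent S D \<and> flat D = xs"
proof (induction S arbitrary: xs)
  case (Lf x)
  then obtain a where "xs = [a]" by (cases xs) auto
  then show ?case by (intro exI[of _ "Lf a"]) simp
next
  case (Nd ss)
  have "\<exists>Ds. list_all2 congruent ss' Ds \<and> concat (map flat Ds) = xs"
    if "length xs = length (concat (map flat ss'))" "set ss' \<subseteq> set ss" for ss' and xs :: "'b list"
    using that
  proof (induction ss' arbitrary: xs)
    case (Cons s ss')
    obtain D where D: "congruent s D" "flat D = take (length (flat s)) xs"
      using Nd.IH[of s "take (length (flat s)) xs"] Cons.prems by auto
    obtain Ds where "list_all2 congruent ss' Ds" "concat (map flat Ds) = drop (length (flat s)) xs"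
      using Cons.IH[of "drop (length (flat s)) xs"] Cons.prems by auto
    then show ?case using D by (intro exI[of _ "D # Ds"]) simp
  qed simp
  then obtain Ds where "list_all2 congruent ss Ds" "concat (map flat Ds) = xs"
    using Nd.prems by auto
  then show ?case by (intro exI[of _ "Nd Ds"]) simp
qed

lemma the_congruent_eq: "congruent S D \<Longrightarrow> (THE D'. congruent S D' \<and> flat D' = flat D) = D"
  by (rule the_equality) (auto intro: congruent_flat_inj)

lemma flat_the_congruent:
  "length xs = length (flat S) \<Longrightarrow> flat (THE D. congruent S D \<and> flat D = xs) = xs"
  using ex_congruent_flat[of xs S] the_congruent_eq by metis

lemma enc_layout_NTM_eq:
  "congruent S D \<Longrightarrow> flat D = enc_strides (flat T) al \<Longrightarrow> enc_layout (NTM S T al) = (S, D)"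
  unfolding enc_layout_def by (metis ntmor.sel the_congruent_eq)

lemma fst_enc_layout: "fst (enc_layout f) = mdom f"
  by (simp add: enc_layout_def)

lemma flat_snd_enc_layout:
  "length (amap f) = length (flat (mdom f)) \<Longrightarrow>
     flat (snd (enc_layout f)) = enc_strides (flat (mcod f)) (amap f)"
  unfolding enc_layout_def by (simp add: flat_the_congruent enc_strides_def)

definition modes_layout :: "(nat \<times> nat) list \<Rightarrow> layout" where
  "modes_layout zs =
     (if length zs > 1 then (Nd (map (Lf \<circ> fst) zs), Nd (map (Lf \<circ> snd) zs))
      else if length zs = 1 then (Lf (fst (hd zs)), Lf (snd (hd zs)))
      else (Lf 1, Lf 0))"

lemma coal_layout_eq_modes_layout:
  "coal_layout L = modes_layout (coal_flat_l (zip (flat (fst L)) (flat (snd L))))"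
  by (simp add: coal_layout_def modes_layout_def Let_def)

lemma concat_map_flat_Lf: "concat (map (flat \<circ> Lf) xs) = xs"
  by (induction xs) auto

lemma enc_layout_coal_shape:
  assumes "length bb = length sb"
  shows "enc_layout
           (if length sb > 1 then NTM (Nd (map Lf sb)) (Nd (map Lf tb)) bb
            else if length sb = 1 then NTM (Lf (hd sb)) (Nd (map Lf tb)) bb
            else NTM (Lf 1) (Nd (map Lf tb)) [None])
         = modes_layout (zip sb (enc_strides tb bb))"
proof -
  have len: "length (enc_strides tb bb) = length sb" using assms by (simp add: enc_strides_def)
  consider (many) "length sb > 1" | (one) s where "sb = [s]" | (none) "sb = []"
    by (cases sb rule: remdups_adj.cases) auto
  then show ?thesis
  proof cases
    case many
    have cong: "congruent (Nd (map Lf sb)) (Nd (map Lf (enc_strides tb bb)))"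
      using len by (simp add: list_all2_conv_all_nth)
    have "enc_layout (NTM (Nd (map Lf sb)) (Nd (map Lf tb)) bb) =
          (Nd (map Lf sb), Nd (map Lf (enc_strides tb bb)))"
      by (rule enc_layout_NTM_eq) (use cong in \<open>simp_all add: concat_map_flat_Lf\<close>)
    then show ?thesis
      using many len unfolding modes_layout_def map_map[symmetric] by simp
  next
    case one
    then obtain b where "bb = [b]" using assms by (cases bb) auto
    then show ?thesis
      using one by (simp add: enc_layout_NTM_eq concat_map_flat_Lf modes_layout_def enc_strides_def)
  next
    case none
    then show ?thesis
      by (simp add: enc_layout_NTM_eq concat_map_flat_Lf modes_layout_def enc_strides_def)
  qed
qed

theorem mainTheorem3:
  assumes "is_ntmor f"
  shows "coal_layout (enc_layout f) = enc_layout (coal_mor f)"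
proof -
  interpret coalescible "flat (mdom f)" "flat (mcod f)" "amap f"
    using assms by unfold_locales (auto simp: is_ntmor_def positive_nt_def)
  obtain sb tb bb where data: "coal_data (flat (mdom f)) (flat (mcod f)) (amap f) = (sb, tb, bb)"
    by (metis prod_cases3)
  have len: "length (amap f) = length (flat (mdom f))"
    using mor0 by (simp add: is_tuple_mor_def)
  have "coal_layout (enc_layout f) =
          modes_layout (coal_flat_l (zip (flat (mdom f)) (enc_strides (flat (mcod f)) (amap f))))"
    by (simp add: coal_layout_eq_modes_layout flat_snd_enc_layout[OF len] fst_enc_layout)
  also have "\<dots> = modes_layout (zip sb (enc_strides tb bb))"
    using coal_flat_l_eq_coal_data(1)[OF data] by simp
  also have "\<dots> = enc_layout (coal_mor f)"
    unfolding coal_mor_def data using enc_layout_coal_shape coal_flat_l_eq_coal_data(2)[OF data]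
    by simp
  finally show ?thesis .
qed

end
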